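(* Let $n\ge2$, $\omega\in(0,1)$, and let $B$ be a random variable with mean $0$ and variance $1$. Let $B_1,\dots,B_n$ be independent with $B_i\overset{d}{=}\mu_i+\sigma_iB$, where $\sigma_i>0$ and $\sigma_1\le\cdots\le\sigma_n$. Use the identity sequence with the schedule $\boldsymbol x=\boldsymbol\mu+\alpha\boldsymbol\sigma$, i.e. $x_i=\mu_i+\alpha\sigma_i$, where $$\alpha=\sqrt{\frac{1-\omega}{2\omega}+\frac{\sigma_{n-1}}{2\sum_{i=1}^{n-1}\sigma_i}}.$$ Then $$r_\omega=\frac{C(\mathrm{Id},\boldsymbol x,\omega)}{\min\{C(\tau,\boldsymbol y,\omega):\tau\in\mathsf S_n,\ \boldsymbol y\in\mathbb R_+^n\}}\le K(B,\omega):=\frac{\sqrt{2\omega}}{\omega\,\mathbb E B(\omega)^-+(1-\omega)\,\mathbb E B(\omega)^+},$$ where $B(\omega)=B-Q_B(1-\omega)$ and $Q_B(y)=\inf\{x:y\le\mathbb P(B\le x)\}$.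
   Context: Appointment model: a sequence is a permutation $\tau\in\mathsf S_n$ of $\{1,\dots,n\}$, $\tau(i)$ being the patient in appointment slot $i$. A schedule is a vector $\boldsymbol y=(y_1,\dots,y_n)$, where $y_j$ is the interarrival time between patient $j$ and the next patient. Waiting times $W_i$ and idle times $I_i$ of slot $i$ are given by $W_1=I_1=0$ and $W_{i+1}=(W_i+B_{\tau(i)}-y_{\tau(i)})^+$, $I_{i+1}=(W_i+B_{\tau(i)}-y_{\tau(i)})^-$, where $a^+=\max\{0,a\}$, $a^-=\max\{0,-a\}$. The cost is $C(\tau,\boldsymbol y,\omega)=\omega\sum_{i=1}^n\mathbb E I_i+(1-\omega)\sum_{i=1}^n\mathbb E W_i$. $\mathrm{Id}$ is the identity permutation. *)

theory Defs
  imports "HOL-Probability.Probability" "HOL-Combinatorics.Permutations"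
begin

text \<open>Realization-wise waiting time W_i and idle time I_i of slot i (slots 1..n),
  given sequence tau, schedule y (indexed by patient) and service times b (indexed by patient).
  Index 0 is unused.\<close>
primrec wait_time :: "(nat \<Rightarrow> nat) \<Rightarrow> (nat \<Rightarrow> real) \<Rightarrow> (nat \<Rightarrow> real) \<Rightarrow> nat \<Rightarrow> real" where
  "wait_time \<tau> y b 0 = 0"
| "wait_time \<tau> y b (Suc i) =
     (if i = 0 then 0 else max 0 (wait_time \<tau> y b i + b (\<tau> i) - y (\<tau> i)))"

fun idle_time :: "(nat \<Rightarrow> nat) \<Rightarrow> (nat \<Rightarrow> real) \<Rightarrow> (nat \<Rightarrow> real) \<Rightarrow> nat \<Rightarrow> real" where
  "idle_time \<tau> y b 0 = 0"
| "idle_time \<tau> y b (Suc i) =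
     (if i = 0 then 0 else max 0 (- (wait_time \<tau> y b i + b (\<tau> i) - y (\<tau> i))))"

definition appt_cost ::
  "'a measure \<Rightarrow> (nat \<Rightarrow> 'a \<Rightarrow> real) \<Rightarrow> nat \<Rightarrow> (nat \<Rightarrow> nat) \<Rightarrow> (nat \<Rightarrow> real) \<Rightarrow> real \<Rightarrow> real" where
  "appt_cost M Bs n \<tau> y \<omega> =
     \<omega> * (\<Sum>i = 1..n. integral\<^sup>L M (\<lambda>s. idle_time \<tau> y (\<lambda>j. Bs j s) i))
     + (1 - \<omega>) * (\<Sum>i = 1..n. integral\<^sup>L M (\<lambda>s. wait_time \<tau> y (\<lambda>j. Bs j s) i))"

definition quantile :: "'b measure \<Rightarrow> ('b \<Rightarrow> real) \<Rightarrow> real \<Rightarrow> real" where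
  "quantile N B p = Inf {x. p \<le> measure N {s \<in> space N. B s \<le> x}}"

definition K_bound :: "'b measure \<Rightarrow> ('b \<Rightarrow> real) \<Rightarrow> real \<Rightarrow> real" where
  "K_bound N B \<omega> =
     (let q = quantile N B (1 - \<omega>) in
      sqrt (2 * \<omega>) /
        (\<omega> * integral\<^sup>L N (\<lambda>s. max 0 (- (B s - q)))
         + (1 - \<omega>) * integral\<^sup>L N (\<lambda>s. max 0 (B s - q))))"

end

(*
  In any sequence, the cost omega E I + (1 - omega) E W of the slot after patient j is
  the expected pinball loss of W' + B_j - y_j, where the waiting time W' before patient j is
  independent of B_j. A newsvendor argument shows that this is at least the pinball loss of B_j
  around its (1 - omega)-quantile, which is sigma_j times omega E B(omega)^- + (1 - omega) E B(omega)^+.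
  The last patient contributes no such slot, so the optimal cost is at least this quantity times
  sigma_1 + ... + sigma_(n-1).

  For the identity sequence and the schedule mu + alpha sigma, the Lindley recursion
  W' = (W + B_j - x_j)^+, I' = (W + B_j - x_j)^- with W independent of B_j gives exact relations
  between the first and second moments of consecutive waiting and idle times. Telescoping them
  bounds alpha times the total expected waiting time together with the second moment of the last
  waiting time, and for the given alpha this yields the cost bound sqrt(2 omega) (sigma_1 + ... +
  sigma_(n-1)).
*)
theory Submission
  imports Defs
begin

section \<open>The pinball loss\<close>

definition pinball_loss :: "real \<Rightarrow> real \<Rightarrow> real" where
  "pinball_loss \<omega> t = \<omega> * max 0 (- t) + (1 - \<omega>) * max 0 t"

lemma pinball_loss_nonneg: "0 \<le> \<omega> \<Longrightarrow> \<omega> \<le> 1 \<Longrightarrow> 0 \<le> pinball_loss \<omega> t"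
  unfolding pinball_loss_def by simp

lemma pinball_loss_pos: "0 < \<omega> \<Longrightarrow> \<omega> < 1 \<Longrightarrow> t \<noteq> 0 \<Longrightarrow> 0 < pinball_loss \<omega> t"
  unfolding pinball_loss_def by (cases "t < 0") (auto simp: max_def mult_less_0_iff add_pos_nonneg add_nonneg_pos)

lemma pinball_loss_scale: "0 \<le> c \<Longrightarrow> pinball_loss \<omega> (c * t) = c * pinball_loss \<omega> t"
  unfolding pinball_loss_def
  by (cases "t < 0") (auto simp: max_def algebra_simps mult_le_0_iff zero_le_mult_iff)

lemma pinball_loss_subgradient:
  assumes "0 \<le> \<omega>" "\<omega> \<le> 1"
  shows "pinball_loss \<omega> r + max 0 d * (if r \<le> 0 then \<omega> else \<omega> - 1)
           - max 0 (- d) * (if r < 0 then \<omega> else \<omega> - 1) \<le> pinball_loss \<omega> (r - d)"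
  using assms unfolding pinball_loss_def
  by (cases "r < 0"; cases "r = 0"; cases "d \<le> 0"; cases "r \<le> d")
     (simp_all add: max_def algebra_simps mult_left_mono mult_right_mono mult_left_le_one_le)

lemma borel_measurable_pinball_loss [measurable]: "pinball_loss \<omega> \<in> borel_measurable borel"
  unfolding pinball_loss_def[abs_def] by measurable

lemma integrable_pinball_loss:
  "integrable M f \<Longrightarrow> integrable M (\<lambda>s. pinball_loss \<omega> (f s))"
  unfolding pinball_loss_def by (intro Bochner_Integration.integrable_add integrable_mult_right integrable_max) auto

lemma integral_pinball_loss:
  "integrable M f \<Longrightarrow> integral\<^sup>L M (\<lambda>s. pinball_loss \<omega> (f s))
     = \<omega> * integral\<^sup>L M (\<lambda>s. max 0 (- f s)) + (1 - \<omega>) * integral\<^sup>L M (\<lambda>s. max 0 (f s))"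
  unfolding pinball_loss_def by (subst Bochner_Integration.integral_add) auto

section \<open>Real inequalities behind the upper bound\<close>

text \<open>In the application a, b, e and f are the first and second moments of the waiting and idle
  times of consecutive slots.\<close>
lemma moment_recursion_bound:
  fixes a b e f \<sigma> :: "nat \<Rightarrow> real" and \<alpha> :: real
  assumes "1 \<le> m"
    and \<sigma>_pos: "\<And>i. 1 \<le> i \<Longrightarrow> i \<le> m \<Longrightarrow> 0 < \<sigma> i"
    and \<sigma>_mono: "\<And>i. 1 \<le> i \<Longrightarrow> i < m \<Longrightarrow> \<sigma> i \<le> \<sigma> (Suc i)"
    and first: "\<And>i. 1 \<le> i \<Longrightarrow> i \<le> m \<Longrightarrow> a (Suc i) - e (Suc i) = a i - \<alpha> * \<sigma> i"
    and second: "\<And>i. 1 \<le> i \<Longrightarrow> i \<le> m \<Longrightarrow>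
                   b (Suc i) + f (Suc i) = b i - 2 * \<alpha> * \<sigma> i * a i + (\<sigma> i)\<^sup>2 * (1 + \<alpha>\<^sup>2)"
    and jensen: "\<And>i. 1 \<le> i \<Longrightarrow> i \<le> m \<Longrightarrow> (e (Suc i))\<^sup>2 \<le> f (Suc i)"
    and "b 1 = 0" and b_nonneg: "\<And>i. 0 \<le> b i"
  shows "2 * \<alpha> * (\<Sum>i = 1..m. a (Suc i)) + b (Suc m) / \<sigma> m \<le> (\<Sum>i = 1..m. \<sigma> i)"
proof -
  have step: "b (Suc i) / \<sigma> i + 2 * \<alpha> * a (Suc i) \<le> b i / \<sigma> i + \<sigma> i" if i: "1 \<le> i" "i \<le> m" for i
  proof -
    have e: "e (Suc i) = (a (Suc i) - a i) + \<alpha> * \<sigma> i" using first[OF i] by simp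
    have "(e (Suc i))\<^sup>2 = (a (Suc i) - a i)\<^sup>2 + 2 * \<alpha> * \<sigma> i * (a (Suc i) - a i) + \<alpha>\<^sup>2 * (\<sigma> i)\<^sup>2"
      unfolding e by (simp add: power2_eq_square algebra_simps)
    then have sq_step: "b (Suc i) + 2 * \<alpha> * \<sigma> i * a (Suc i) \<le> b i + (\<sigma> i)\<^sup>2"
      using second[OF i] jensen[OF i] zero_le_power2[of "a (Suc i) - a i"]
      by (simp add: power2_eq_square algebra_simps)
    show ?thesis
      using \<sigma>_pos[OF i] mult_left_mono[OF sq_step less_imp_le[OF \<sigma>_pos[OF i]]]
      by (simp add: field_simps power2_eq_square)
  qed
  have "2 * \<alpha> * (\<Sum>i = 1..j. a (Suc i)) + b (Suc j) / \<sigma> j \<le> (\<Sum>i = 1..j. \<sigma> i)"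
    if "1 \<le> j" "j \<le> m" for j
    using that
  proof (induction j rule: nat_induct_at_least)
    case base
    then show ?case using step[of 1] \<open>b 1 = 0\<close> by simp
  next
    case (Suc j)
    have "b (Suc j) / \<sigma> (Suc j) \<le> b (Suc j) / \<sigma> j"
      using Suc \<sigma>_pos[of j] \<sigma>_mono[of j] b_nonneg by (intro divide_left_mono) auto
    then show ?case using Suc step[of "Suc j"] by (simp add: distrib_left)
  qed
  then show ?thesis using \<open>1 \<le> m\<close> by simp
qed

lemma weighted_cost_le_of_moment_bound:
  fixes \<omega> \<alpha> \<rho> c w T S :: real
  assumes "0 < \<alpha>" "0 < \<rho>" "1 - \<omega> \<le> \<rho>" "0 < c" "w \<le> T"
    and moment_bound: "2 * \<alpha> * T + w\<^sup>2 / c \<le> S"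
  shows "\<omega> * w + (1 - \<omega>) * T \<le> \<rho> * S / (2 * \<alpha>) + \<alpha> * c * (1 - \<rho>)\<^sup>2 / (2 * \<rho>)"
proof -
  have "\<omega> * w + (1 - \<omega>) * T \<le> (1 - \<rho>) * w + \<rho> * T"
    using mult_nonneg_nonneg[of "\<rho> - (1 - \<omega>)" "T - w"] assms by (simp add: algebra_simps)
  also have "\<rho> * T \<le> \<rho> * S / (2 * \<alpha>) - \<rho> * w\<^sup>2 / (2 * \<alpha> * c)"
    using moment_bound assms mult_left_mono[of "2 * \<alpha> * T" "S - w\<^sup>2 / c" \<rho>] by (simp add: field_simps)
  also have "(1 - \<rho>) * w - \<rho> * w\<^sup>2 / (2 * \<alpha> * c) \<le> \<alpha> * c * (1 - \<rho>)\<^sup>2 / (2 * \<rho>)"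
    \<comment> \<open>AM-GM\<close>
  proof -
    have "0 \<le> (\<rho> * w - \<alpha> * c * (1 - \<rho>))\<^sup>2" by simp
    then show ?thesis using assms by (simp add: field_simps power2_eq_square)
  qed
  ultimately show ?thesis by simp
qed

lemma remainder_term_le:
  fixes u p r \<omega> :: real
  assumes "0 < u" "u \<le> p" "p \<le> 1" "0 < r" "r\<^sup>2 = 2 * \<omega>"
  shows "u * (1 + p) * \<omega> * (1 - u) / (2 * r * p) \<le> r"
proof -
  have "0 < \<omega>"
    using zero_less_power[OF assms(4), of 2] assms(5) by simp
  have "(1 + p) * (1 - u) \<le> 2"
    using assms mult_mono[of "1 + p" 2 "1 - u" 1] by simp
  then have "u * (1 + p) * (1 - u) \<le> 2 * p"
    using assms mult_mono[of u p "(1 + p) * (1 - u)" 2] by (simp add: mult.assoc)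
  then have "u * (1 + p) * \<omega> * (1 - u) \<le> \<omega> * (2 * p)"
    using \<open>0 < \<omega>\<close> mult_left_mono[of "u * (1 + p) * (1 - u)" "2 * p" \<omega>] by (simp add: algebra_simps)
  also have "\<dots> \<le> r * (2 * p * r)"
    using \<open>0 < \<omega>\<close> assms by (simp add: power2_eq_square algebra_simps)
  finally show ?thesis
    using assms by (simp add: field_simps)
qed

text \<open>The scale \<alpha> minimises the first two terms \<omega> \<alpha> S + \<rho> S / (2 \<alpha>).\<close>
lemma cost_bound_at_optimal_scale:
  fixes \<omega> c S :: real
  assumes "0 < \<omega>" "\<omega> < 1" "0 < c" "c \<le> S"
  defines "\<rho> \<equiv> 1 - \<omega> + \<omega> * c / S"
  defines "\<alpha> \<equiv> sqrt (\<rho> / (2 * \<omega>))"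
  shows "\<omega> * \<alpha> * S + \<rho> * S / (2 * \<alpha>) + \<alpha> * c * (1 - \<rho>)\<^sup>2 / (2 * \<rho>) \<le> sqrt (2 * \<omega>) * S"
proof -
  define u where "u = c / S"
  define p where "p = sqrt \<rho>"
  define r where "r = sqrt (2 * \<omega>)"
  have "0 < S" "0 < u" "u \<le> 1" "c = u * S"
    using assms by (auto simp: u_def)
  have one_minus_\<rho>: "1 - \<rho> = \<omega> * (1 - u)"
    by (simp add: \<rho>_def u_def algebra_simps)
  have "0 \<le> \<omega> * (1 - u)" "\<omega> * (1 - u) \<le> 1 - u"
    using \<open>u \<le> 1\<close> \<open>0 < \<omega>\<close> \<open>\<omega> < 1\<close> by (simp_all add: mult_left_le_one_le)
  then have "u \<le> \<rho>" "\<rho> \<le> 1"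
    using one_minus_\<rho> by linarith+
  have "\<rho> \<le> p"
    unfolding p_def using \<open>0 < u\<close> \<open>u \<le> \<rho>\<close> \<open>\<rho> \<le> 1\<close> by (intro real_le_rsqrt) (simp add: power2_eq_square mult_left_le_one_le)
  have p: "0 < p" "p \<le> 1" "p\<^sup>2 = \<rho>" "u \<le> p"
    using \<open>0 < u\<close> \<open>u \<le> \<rho>\<close> \<open>\<rho> \<le> 1\<close> \<open>\<rho> \<le> p\<close> by (auto simp: p_def)
  have r: "0 < r" "r\<^sup>2 = 2 * \<omega>"
    using \<open>0 < \<omega>\<close> by (simp_all add: r_def)
  have \<alpha>: "\<alpha> = p / r"
    by (simp add: \<alpha>_def p_def r_def real_sqrt_divide)
  have "\<omega> * \<alpha> * S + \<rho> * S / (2 * \<alpha>) = r * p * S"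
    unfolding \<alpha> p(3)[symmetric] using r p(1) by (simp add: field_simps power2_eq_square)
  moreover have "\<alpha> * c * (1 - \<rho>)\<^sup>2 / (2 * \<rho>) = S * (1 - p) * (u * (1 + p) * \<omega> * (1 - u)) / (2 * r * p)"
  proof -
    have sq: "(1 - \<rho>)\<^sup>2 = (1 - p) * (1 + p) * (\<omega> * (1 - u))"
      unfolding power2_eq_square one_minus_\<rho>[symmetric] p(3)[symmetric] by (simp add: algebra_simps)
    have "\<alpha> * c * (1 - \<rho>)\<^sup>2 / (2 * \<rho>) = (p / r) * (u * S) * ((1 - p) * (1 + p) * (\<omega> * (1 - u))) / (2 * p\<^sup>2)"
      by (simp only: \<alpha> \<open>c = u * S\<close> sq p(3))
    also have "\<dots> = S * (1 - p) * (u * (1 + p) * \<omega> * (1 - u)) / (2 * r * p)"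
      using r(1) p(1) by (simp add: field_simps power2_eq_square)
    finally show ?thesis .
  qed
  moreover have "S * (1 - p) * (u * (1 + p) * \<omega> * (1 - u)) / (2 * r * p) \<le> S * (1 - p) * r"
    using mult_left_mono[OF remainder_term_le[OF \<open>0 < u\<close> p(4,2) r], of "S * (1 - p)"] \<open>0 < S\<close> p(2)
    by simp
  ultimately show ?thesis
    using r_def by (simp add: algebra_simps)
qed

lemma cost_le_sqrt_of_moment_bound:
  fixes \<omega> \<alpha> c w T S :: real
  assumes "0 < \<omega>" "\<omega> < 1" "0 < c" "c \<le> S"
    and \<alpha>: "\<alpha> = sqrt ((1 - \<omega>) / (2 * \<omega>) + c / (2 * S))"
    and "w \<le> T" and moment_bound: "2 * \<alpha> * T + w\<^sup>2 / c \<le> S"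
  shows "\<omega> * (w + \<alpha> * S) + (1 - \<omega>) * T \<le> sqrt (2 * \<omega>) * S"
proof -
  define \<rho> where "\<rho> = 1 - \<omega> + \<omega> * c / S"
  have "1 - \<omega> \<le> \<rho>" "0 < \<rho>"
    using assms by (simp_all add: \<rho>_def add_pos_nonneg)
  have "\<alpha> = sqrt (\<rho> / (2 * \<omega>))"
    unfolding \<alpha> \<rho>_def using assms by (simp add: field_simps)
  then have "0 < \<alpha>"
    using \<open>0 < \<rho>\<close> \<open>0 < \<omega>\<close> by simp
  have "\<omega> * w + (1 - \<omega>) * T \<le> \<rho> * S / (2 * \<alpha>) + \<alpha> * c * (1 - \<rho>)\<^sup>2 / (2 * \<rho>)"
    using weighted_cost_le_of_moment_bound[OF \<open>0 < \<alpha>\<close> \<open>0 < \<rho>\<close> \<open>1 - \<omega> \<le> \<rho>\<close> \<open>0 < c\<close> \<open>w \<le> T\<close> moment_bound] .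
  moreover have "\<omega> * \<alpha> * S + \<rho> * S / (2 * \<alpha>) + \<alpha> * c * (1 - \<rho>)\<^sup>2 / (2 * \<rho>) \<le> sqrt (2 * \<omega>) * S"
    using cost_bound_at_optimal_scale[OF assms(1-4)] \<open>\<alpha> = sqrt (\<rho> / (2 * \<omega>))\<close> unfolding \<rho>_def by simp
  ultimately show ?thesis
    by (simp add: algebra_simps)
qed

lemma (in prob_space) expectation_square_le:
  fixes X :: "'a \<Rightarrow> real"
  assumes "integrable M X" "integrable M (\<lambda>s. (X s)\<^sup>2)"
  shows "(expectation X)\<^sup>2 \<le> expectation (\<lambda>s. (X s)\<^sup>2)"
  using variance_positive[of X] variance_eq[OF assms] by simp

lemma integrable_square_add:
  fixes X Y :: "'a \<Rightarrow> real"
  assumes [measurable]: "X \<in> borel_measurable M" "Y \<in> borel_measurable M"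
    and "integrable M (\<lambda>s. (X s)\<^sup>2)" "integrable M (\<lambda>s. (Y s)\<^sup>2)"
  shows "integrable M (\<lambda>s. (X s + Y s)\<^sup>2)"
proof (rule Bochner_Integration.integrable_bound)
  show "integrable M (\<lambda>s. 2 * ((X s)\<^sup>2 + (Y s)\<^sup>2))"
    using assms(3,4) by simp
  have "(a + b)\<^sup>2 \<le> 2 * (a\<^sup>2 + b\<^sup>2)" for a b :: real
    using sum_squares_ge_zero[of "a - b" 0] by (simp add: power2_eq_square algebra_simps)
  then show "AE s in M. norm ((X s + Y s)\<^sup>2) \<le> norm (2 * ((X s)\<^sup>2 + (Y s)\<^sup>2))"
    by (intro AE_I2) simp
qed measurable

lemma integrable_max_0_square:
  fixes X :: "'a \<Rightarrow> real"
  assumes [measurable]: "X \<in> borel_measurable M" and "integrable M (\<lambda>s. (X s)\<^sup>2)"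
  shows "integrable M (\<lambda>s. (max 0 (X s))\<^sup>2)" "integrable M (\<lambda>s. (max 0 (- X s))\<^sup>2)"
  by (rule Bochner_Integration.integrable_bound[OF assms(2)]; force simp: max_def)+

lemma (in prob_space) expectation_if_event:
  assumes "{s \<in> space M. P s} \<in> events"
  shows "integrable M (\<lambda>s. if P s then a else b :: real)"
    and "expectation (\<lambda>s. if P s then a else b) = b + (a - b) * prob {s \<in> space M. P s}"
proof -
  let ?A = "{s \<in> space M. P s}"
  have eq: "expectation (\<lambda>s. if P s then a else b) = expectation (\<lambda>s. b + (a - b) * indicator ?A s)"
    by (rule Bochner_Integration.integral_cong) (auto simp: indicator_def)
  have ind: "integrable M (indicator ?A :: 'a \<Rightarrow> real)"
    using assms by (simp add: emeasure_eq_measure)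
  have "integrable M (\<lambda>s. b + (a - b) * indicator ?A s)"
    using ind by simp
  then show "integrable M (\<lambda>s. if P s then a else b)"
    using Bochner_Integration.integrable_cong[of M M "\<lambda>s. b + (a - b) * indicator ?A s" "\<lambda>s. if P s then a else b"]
    by (auto simp: indicator_def)
  show "expectation (\<lambda>s. if P s then a else b) = b + (a - b) * prob ?A"
    unfolding eq using ind assms by (simp add: prob_space)
qed

lemma (in prob_space) lindley_step_moments:
  fixes V Z :: "'a \<Rightarrow> real"
  assumes indep: "indep_var borel V borel Z"
    and V: "integrable M V" "integrable M (\<lambda>s. (V s)\<^sup>2)"
    and Z: "integrable M Z" "integrable M (\<lambda>s. (Z s)\<^sup>2)"
  defines "W \<equiv> \<lambda>s. max 0 (V s + Z s)" and "I \<equiv> \<lambda>s. max 0 (- (V s + Z s))"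
  shows "integrable M I" "integrable M (\<lambda>s. (I s)\<^sup>2)"
    and "expectation W - expectation I = expectation V + expectation Z"
    and "expectation (\<lambda>s. (W s)\<^sup>2) + expectation (\<lambda>s. (I s)\<^sup>2)
           = expectation (\<lambda>s. (V s)\<^sup>2) + 2 * expectation V * expectation Z + expectation (\<lambda>s. (Z s)\<^sup>2)"
proof -
  have [measurable]: "V \<in> borel_measurable M" "Z \<in> borel_measurable M"
    using indep_var_rv1[OF indep] indep_var_rv2[OF indep] by simp_all
  have "integrable M (\<lambda>s. (V s + Z s)\<^sup>2)"
    using V(2) Z(2) by (intro integrable_square_add) auto
  then have W2: "integrable M (\<lambda>s. (W s)\<^sup>2)" and I2: "integrable M (\<lambda>s. (I s)\<^sup>2)"
    using integrable_max_0_square[of "\<lambda>s. V s + Z s"] unfolding W_def I_def by auto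
  have W: "integrable M W"
    using V(1) Z(1) unfolding W_def by auto
  show I: "integrable M I"
    using V(1) Z(1) unfolding I_def by auto
  show "integrable M (\<lambda>s. (I s)\<^sup>2)" by (fact I2)
  have "expectation W - expectation I = expectation (\<lambda>s. W s - I s)"
    using W I by simp
  also have "\<dots> = expectation (\<lambda>s. V s + Z s)"
    unfolding W_def I_def by (rule Bochner_Integration.integral_cong) auto
  finally show "expectation W - expectation I = expectation V + expectation Z"
    using V(1) Z(1) by simp
  have "expectation (\<lambda>s. (W s)\<^sup>2) + expectation (\<lambda>s. (I s)\<^sup>2) = expectation (\<lambda>s. (W s)\<^sup>2 + (I s)\<^sup>2)"
    using W2 I2 by simp
  also have "\<dots> = expectation (\<lambda>s. (V s)\<^sup>2 + 2 * (V s * Z s) + (Z s)\<^sup>2)"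
    unfolding W_def I_def
    by (rule Bochner_Integration.integral_cong) (auto simp: max_def power2_eq_square algebra_simps)
  finally show "expectation (\<lambda>s. (W s)\<^sup>2) + expectation (\<lambda>s. (I s)\<^sup>2)
      = expectation (\<lambda>s. (V s)\<^sup>2) + 2 * expectation V * expectation Z + expectation (\<lambda>s. (Z s)\<^sup>2)"
    using V Z indep_var_lebesgue_integral[OF indep V(1) Z(1)] indep_var_integrable[OF indep V(1) Z(1)]
    by simp
qed

lemma quantile_prob_bounds:
  fixes N :: "'b measure" and B :: "'b \<Rightarrow> real"
  assumes "prob_space N" and [measurable]: "B \<in> borel_measurable N" and "0 < p" "p < 1"
  shows "p \<le> measure N {s \<in> space N. B s \<le> quantile N B p}"
    and "measure N {s \<in> space N. B s < quantile N B p} \<le> p"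
proof -
  interpret N: prob_space N by fact
  define D where "D = distr N borel B"
  interpret D: real_distribution D unfolding D_def by simp
  have cdf_eq: "cdf D x = measure N {s \<in> space N. B s \<le> x}" for x
    unfolding cdf_def D_def by (subst measure_distr) (auto intro!: arg_cong[where f="measure N"])
  have less_eq: "measure D {..<x} = measure N {s \<in> space N. B s < x}" for x
    unfolding D_def by (subst measure_distr) (auto intro!: arg_cong[where f="measure N"])
  define S where "S = {x. p \<le> cdf D x}"
  define q where "q = Inf S"
  have q_eq: "quantile N B p = q" unfolding quantile_def q_def S_def cdf_eq ..
  have "eventually (\<lambda>x. p < cdf D x) at_top"
    using D.cdf_lim_at_top_prob \<open>p < 1\<close> by (intro order_tendstoD) auto
  then obtain x0 where "p < cdf D x0" by (metis eventually_at_top_linorder order_refl)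
  then have "S \<noteq> {}" unfolding S_def by (auto intro: less_imp_le)
  have "eventually (\<lambda>x. cdf D x < p) at_bot"
    using D.cdf_lim_at_bot \<open>0 < p\<close> by (intro order_tendstoD) auto
  then obtain L where L: "\<And>x. x \<le> L \<Longrightarrow> cdf D x < p" by (metis eventually_at_bot_linorder)
  have "bdd_below S"
  proof (rule bdd_belowI)
    show "L \<le> x" if "x \<in> S" for x
      using that L[of x] unfolding S_def by (cases "x \<le> L") auto
  qed
  have above: "p \<le> cdf D x" if "q < x" for x
  proof -
    obtain s where "s \<in> S" "s < x" using \<open>q < x\<close> \<open>S \<noteq> {}\<close> unfolding q_def by (meson cInf_lessD)
    then show ?thesis unfolding S_def using D.cdf_nondecreasing[of s x] by simp
  qed
  have below: "cdf D x < p" if "x < q" for x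
    using that cInf_lower[OF _ \<open>bdd_below S\<close>, of x] unfolding q_def S_def by force
  have "(cdf D \<longlongrightarrow> cdf D q) (at_right q)"
    using D.cdf_is_right_cont[of q] by (simp add: continuous_within)
  moreover have "eventually (\<lambda>x. p \<le> cdf D x) (at_right q)"
    using eventually_at_right_less[of q] by (rule eventually_mono) (rule above)
  ultimately have "p \<le> cdf D q" by (rule tendsto_lowerbound) simp
  then show "p \<le> measure N {s \<in> space N. B s \<le> quantile N B p}" unfolding q_eq cdf_eq .
  have "eventually (\<lambda>x. cdf D x \<le> p) (at_left q)"
    by (rule eventually_at_leftI[of "q - 1"]) (auto dest: below intro: less_imp_le)
  with D.cdf_at_left[of q] have "measure D {..<q} \<le> p" by (rule tendsto_upperbound) simp
  then show "measure N {s \<in> space N. B s < quantile N B p} \<le> p" unfolding q_eq less_eq .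
qed

text \<open>The shift is absorbed by the subgradient inequality, with the subgradient at X - t = 0 chosen
  differently for positive and negative shifts. The two subgradients have expectations of opposite
  signs exactly because t is a (1 - \<omega>)-quantile of X, and independence lets the expectation of each
  product factor.\<close>
lemma (in prob_space) pinball_loss_indep_shift_ge:
  fixes V X :: "'a \<Rightarrow> real"
  assumes indep: "indep_var borel V borel X" and "integrable M V" "integrable M X"
    and "0 \<le> \<omega>" "\<omega> \<le> 1"
    and le: "1 - \<omega> \<le> prob {s \<in> space M. X s \<le> t}" and less: "prob {s \<in> space M. X s < t} \<le> 1 - \<omega>"
  shows "expectation (\<lambda>s. pinball_loss \<omega> (X s - t)) \<le> expectation (\<lambda>s. pinball_loss \<omega> (V s + X s - c))"
proof -
  have [measurable]: "V \<in> borel_measurable M" "X \<in> borel_measurable M"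
    using indep_var_rv1[OF indep] indep_var_rv2[OF indep] by simp_all
  define d where "d s = c - t - V s" for s
  define G1 where "G1 s = (if X s \<le> t then \<omega> else \<omega> - 1)" for s
  define G2 where "G2 s = (if X s < t then \<omega> else \<omega> - 1)" for s
  have "integrable M d" unfolding d_def using \<open>integrable M V\<close> by simp
  then have int_d: "integrable M (\<lambda>s. max 0 (d s))" "integrable M (\<lambda>s. max 0 (- d s))"
    by auto
  have G1: "integrable M G1" "0 \<le> expectation G1" and G2: "integrable M G2" "expectation G2 \<le> 0"
    using expectation_if_event[of "\<lambda>s. X s \<le> t"] expectation_if_event[of "\<lambda>s. X s < t"] le less
    unfolding G1_def G2_def by auto
  have "indep_var borel (\<lambda>s. max 0 (d s)) borel G1" "indep_var borel (\<lambda>s. max 0 (- d s)) borel G2"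
    using indep_var_compose[OF indep, of "\<lambda>v. max 0 (c - t - v)" borel "\<lambda>x. if x \<le> t then \<omega> else \<omega> - 1" borel]
      indep_var_compose[OF indep, of "\<lambda>v. max 0 (- (c - t - v))" borel "\<lambda>x. if x < t then \<omega> else \<omega> - 1" borel]
    unfolding d_def G1_def G2_def comp_def by simp_all
  note prod1 = indep_var_lebesgue_integral[OF this(1) int_d(1) G1(1)] indep_var_integrable[OF this(1) int_d(1) G1(1)]
   and prod2 = indep_var_lebesgue_integral[OF this(2) int_d(2) G2(1)] indep_var_integrable[OF this(2) int_d(2) G2(1)]
  have "0 \<le> expectation (\<lambda>s. max 0 (d s))" "0 \<le> expectation (\<lambda>s. max 0 (- d s))"
    by (simp_all add: integral_nonneg_AE)
  note products_signs = mult_nonneg_nonneg[OF this(1) G1(2)] mult_nonneg_nonpos[OF this(2) G2(2)]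
  have "expectation (\<lambda>s. pinball_loss \<omega> (X s - t))
      \<le> expectation (\<lambda>s. pinball_loss \<omega> (X s - t)) + expectation (\<lambda>s. max 0 (d s) * G1 s)
         - expectation (\<lambda>s. max 0 (- d s) * G2 s)"
    unfolding prod1(1) prod2(1) using products_signs by linarith
  also have "\<dots> = expectation (\<lambda>s. pinball_loss \<omega> (X s - t) + max 0 (d s) * G1 s - max 0 (- d s) * G2 s)"
    using prod1(2) prod2(2) \<open>integrable M X\<close> by (simp add: integrable_pinball_loss)
  also have "\<dots> \<le> expectation (\<lambda>s. pinball_loss \<omega> ((X s - t) - d s))"
    using prod1(2) prod2(2) \<open>integrable M X\<close> \<open>integrable M d\<close>
      pinball_loss_subgradient[OF \<open>0 \<le> \<omega>\<close> \<open>\<omega> \<le> 1\<close>, of "X s - t" "d s" for s]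
    by (intro integral_mono) (auto simp: G1_def G2_def integrable_pinball_loss)
  also have "\<dots> = expectation (\<lambda>s. pinball_loss \<omega> (V s + X s - c))"
    by (simp add: d_def algebra_simps)
  finally show ?thesis .
qed

section \<open>The appointment model\<close>

lemma wait_time_nonneg: "0 \<le> wait_time \<tau> y b k"
  by (cases k) auto

lemma wait_time_cong:
  "(\<And>j. 1 \<le> j \<Longrightarrow> j < k \<Longrightarrow> b (\<tau> j) = b' (\<tau> j)) \<Longrightarrow> wait_time \<tau> y b k = wait_time \<tau> y b' k"
  by (induction k) auto

lemma measurable_wait_time_PiM:
  "(\<And>j. 1 \<le> j \<Longrightarrow> j < k \<Longrightarrow> \<tau> j \<in> A) \<Longrightarrow>
     (\<lambda>b. wait_time \<tau> y b k) \<in> borel_measurable (PiM A (\<lambda>_. borel))"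
proof (induction k)
  case (Suc k)
  show ?case
  proof (cases "k = 0")
    case False
    then have [measurable]: "(\<lambda>b. b (\<tau> k)) \<in> borel_measurable (PiM A (\<lambda>_. borel))"
      using Suc.prems[of k] by (intro measurable_component_singleton) simp
    have [measurable]: "(\<lambda>b. wait_time \<tau> y b k) \<in> borel_measurable (PiM A (\<lambda>_. borel))"
      using Suc by simp
    show ?thesis by simp
  qed simp
qed simp

lemma slot_cost_eq_pinball_loss:
  "0 < k \<Longrightarrow> \<omega> * idle_time \<tau> y b (Suc k) + (1 - \<omega>) * wait_time \<tau> y b (Suc k)
     = pinball_loss \<omega> (wait_time \<tau> y b k + b (\<tau> k) - y (\<tau> k))"
  by (simp add: pinball_loss_def)

lemma appt_cost_eq_slot_sum:
  assumes "1 \<le> n"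
  shows "appt_cost M Bs n \<tau> y \<omega> =
    (\<Sum>k = 1..n - 1. \<omega> * integral\<^sup>L M (\<lambda>s. idle_time \<tau> y (\<lambda>j. Bs j s) (Suc k))
                    + (1 - \<omega>) * integral\<^sup>L M (\<lambda>s. wait_time \<tau> y (\<lambda>j. Bs j s) (Suc k)))"
proof -
  have drop_first: "(\<Sum>i = 1..n. f i) = (\<Sum>k = 1..n - 1. f (Suc k))" if "f 1 = 0" for f :: "nat \<Rightarrow> real"
  proof -
    have "(\<Sum>i = 1..n. f i) = (\<Sum>k = 0..n - 1. f (Suc k))"
      using assms sum.shift_bounds_cl_Suc_ivl[of f 0 "n - 1"] by simp
    also have "\<dots> = (\<Sum>k = 1..n - 1. f (Suc k))"
      using that by (simp add: sum.atLeast_Suc_atMost)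
    finally show ?thesis .
  qed
  show ?thesis
    unfolding appt_cost_def by (subst (1 2) drop_first) (simp_all add: sum.distrib sum_distrib_left)
qed

lemma sum_butlast_le_sum_butlast_permutes:
  fixes \<sigma> :: "nat \<Rightarrow> real"
  assumes "\<tau> permutes {1..n}" and "\<And>i. i \<in> {1..n} \<Longrightarrow> \<sigma> i \<le> \<sigma> n"
  shows "(\<Sum>i = 1..n - 1. \<sigma> i) \<le> (\<Sum>k = 1..n - 1. \<sigma> (\<tau> k))"
proof (cases "n = 0")
  case False
  have split_last: "(\<Sum>i = 1..n. f i) = (\<Sum>i = 1..n - 1. f i) + f n" for f :: "nat \<Rightarrow> real"
    using False by (cases n) auto
  have "(\<Sum>k = 1..n. \<sigma> (\<tau> k)) = (\<Sum>i = 1..n. \<sigma> i)"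
    using sum.reindex_bij_betw[OF permutes_imp_bij[OF assms(1)]] .
  moreover have "\<tau> n \<in> {1..n}"
    using permutes_in_image[OF assms(1), of n] False by simp
  then have "\<sigma> (\<tau> n) \<le> \<sigma> n"
    by (rule assms(2))
  ultimately show ?thesis
    unfolding split_last by linarith
qed simp

locale appointment_model = M: prob_space M + N: prob_space N
  for M :: "'a measure" and N :: "'b measure" +
  fixes Bs :: "nat \<Rightarrow> 'a \<Rightarrow> real" and B :: "'b \<Rightarrow> real" and n :: nat and \<mu> \<sigma> :: "nat \<Rightarrow> real"
  assumes B_measurable [measurable]: "B \<in> borel_measurable N"
    and B_square_integrable: "integrable N (\<lambda>s. (B s)\<^sup>2)"
    and B_mean: "integral\<^sup>L N B = 0"
    and B_second_moment: "integral\<^sup>L N (\<lambda>s. (B s)\<^sup>2) = 1"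
    and Bs_measurable: "\<And>i. i \<in> {1..n} \<Longrightarrow> Bs i \<in> borel_measurable M"
    and Bs_indep: "M.indep_vars (\<lambda>_. borel) Bs {1..n}"
    and Bs_distr: "\<And>i. i \<in> {1..n} \<Longrightarrow> distr M borel (Bs i) = distr N borel (\<lambda>s. \<mu> i + \<sigma> i * B s)"
    and \<sigma>_pos: "\<And>i. i \<in> {1..n} \<Longrightarrow> 0 < \<sigma> i"
begin

abbreviation wait :: "(nat \<Rightarrow> nat) \<Rightarrow> (nat \<Rightarrow> real) \<Rightarrow> nat \<Rightarrow> 'a \<Rightarrow> real" where
  "wait \<tau> y k s \<equiv> wait_time \<tau> y (\<lambda>j. Bs j s) k"

abbreviation idle :: "(nat \<Rightarrow> nat) \<Rightarrow> (nat \<Rightarrow> real) \<Rightarrow> nat \<Rightarrow> 'a \<Rightarrow> real" where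
  "idle \<tau> y k s \<equiv> idle_time \<tau> y (\<lambda>j. Bs j s) k"

lemma integrable_B: "integrable N B"
  by (rule N.square_integrable_imp_integrable[OF B_measurable B_square_integrable])

lemma
  fixes g :: "real \<Rightarrow> real"
  assumes i: "i \<in> {1..n}" and [measurable]: "g \<in> borel_measurable borel"
  shows integrable_service_iff:
      "integrable M (\<lambda>s. g (Bs i s)) \<longleftrightarrow> integrable N (\<lambda>s. g (\<mu> i + \<sigma> i * B s))"
    and integral_service:
      "integral\<^sup>L M (\<lambda>s. g (Bs i s)) = integral\<^sup>L N (\<lambda>s. g (\<mu> i + \<sigma> i * B s))"
proof -
  have [measurable]: "Bs i \<in> borel_measurable M" using Bs_measurable[OF i] .
  show "integrable M (\<lambda>s. g (Bs i s)) \<longleftrightarrow> integrable N (\<lambda>s. g (\<mu> i + \<sigma> i * B s))"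
    using integrable_distr_eq[of "Bs i" M borel g] integrable_distr_eq[of "\<lambda>s. \<mu> i + \<sigma> i * B s" N borel g]
    by (simp add: Bs_distr[OF i])
  show "integral\<^sup>L M (\<lambda>s. g (Bs i s)) = integral\<^sup>L N (\<lambda>s. g (\<mu> i + \<sigma> i * B s))"
    using integral_distr[of "Bs i" M borel g] integral_distr[of "\<lambda>s. \<mu> i + \<sigma> i * B s" N borel g]
    by (simp add: Bs_distr[OF i])
qed

lemma prob_service:
  assumes i: "i \<in> {1..n}" and "A \<in> sets borel"
  shows "M.prob {s \<in> space M. Bs i s \<in> A} = N.prob {s \<in> space N. \<mu> i + \<sigma> i * B s \<in> A}"
proof -
  have [measurable]: "Bs i \<in> borel_measurable M" using Bs_measurable[OF i] .
  have "M.prob {s \<in> space M. Bs i s \<in> A} = measure (distr M borel (Bs i)) A"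
    using assms by (simp add: measure_distr vimage_def Int_def conj_commute)
  also have "\<dots> = measure (distr N borel (\<lambda>s. \<mu> i + \<sigma> i * B s)) A"
    by (simp add: Bs_distr[OF i])
  also have "\<dots> = N.prob {s \<in> space N. \<mu> i + \<sigma> i * B s \<in> A}"
    using assms by (simp add: measure_distr vimage_def Int_def conj_commute)
  finally show ?thesis .
qed

lemma prob_service_le_less:
  assumes i: "i \<in> {1..n}"
  shows "M.prob {s \<in> space M. Bs i s \<le> \<mu> i + \<sigma> i * t} = N.prob {s \<in> space N. B s \<le> t}"
    and "M.prob {s \<in> space M. Bs i s < \<mu> i + \<sigma> i * t} = N.prob {s \<in> space N. B s < t}"
  using prob_service[OF i, of "{..\<mu> i + \<sigma> i * t}"] prob_service[OF i, of "{..<\<mu> i + \<sigma> i * t}"]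
    \<sigma>_pos[OF i] by simp_all

lemma service_shift_moments:
  assumes i: "i \<in> {1..n}"
  shows "integrable M (\<lambda>s. Bs i s - c)"
    and "integral\<^sup>L M (\<lambda>s. Bs i s - c) = \<mu> i - c"
    and "integrable M (\<lambda>s. (Bs i s - c)\<^sup>2)"
    and "integral\<^sup>L M (\<lambda>s. (Bs i s - c)\<^sup>2) = (\<sigma> i)\<^sup>2 + (\<mu> i - c)\<^sup>2"
proof -
  have square: "(\<mu> i + \<sigma> i * b - c)\<^sup>2 = (\<mu> i - c)\<^sup>2 + 2 * (\<mu> i - c) * \<sigma> i * b + (\<sigma> i)\<^sup>2 * b\<^sup>2" for b
    by (simp add: power2_eq_square algebra_simps)
  show "integrable M (\<lambda>s. Bs i s - c)"
    using integrable_B by (subst integrable_service_iff[OF i]) simp_all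
  show "integral\<^sup>L M (\<lambda>s. Bs i s - c) = \<mu> i - c"
    using integrable_B B_mean by (subst integral_service[OF i]) (simp_all add: N.prob_space)
  show "integrable M (\<lambda>s. (Bs i s - c)\<^sup>2)"
    using integrable_B B_square_integrable by (subst integrable_service_iff[OF i]) (simp_all add: square)
  show "integral\<^sup>L M (\<lambda>s. (Bs i s - c)\<^sup>2) = (\<sigma> i)\<^sup>2 + (\<mu> i - c)\<^sup>2"
    using integrable_B B_square_integrable B_mean B_second_moment
    by (subst integral_service[OF i]) (simp_all add: square N.prob_space)
qed

context
  fixes \<tau> :: "nat \<Rightarrow> nat" and y :: "nat \<Rightarrow> real"
  assumes \<tau>: "\<tau> permutes {1..n}"
begin

lemma slot_patient_in: "k \<in> {1..n} \<Longrightarrow> \<tau> k \<in> {1..n}"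
  using permutes_in_image[OF \<tau>] by blast

lemma wait_square_integrable:
  "k \<le> n \<Longrightarrow> wait \<tau> y k \<in> borel_measurable M \<and> integrable M (\<lambda>s. (wait \<tau> y k s)\<^sup>2)"
proof (induction k)
  case (Suc k)
  show ?case
  proof (cases "k = 0")
    case False
    then have j: "\<tau> k \<in> {1..n}" using Suc.prems slot_patient_in[of k] by simp
    have [measurable]: "wait \<tau> y k \<in> borel_measurable M" "Bs (\<tau> k) \<in> borel_measurable M"
      and "integrable M (\<lambda>s. (wait \<tau> y k s)\<^sup>2)"
      using Suc Bs_measurable[OF j] by auto
    then have "integrable M (\<lambda>s. (wait \<tau> y k s + (Bs (\<tau> k) s - y (\<tau> k)))\<^sup>2)"
      using service_shift_moments(3)[OF j] by (intro integrable_square_add) auto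
    then have "integrable M (\<lambda>s. (max 0 (wait \<tau> y k s + Bs (\<tau> k) s - y (\<tau> k)))\<^sup>2)"
      by (intro integrable_max_0_square) (simp_all add: algebra_simps)
    then show ?thesis using False by simp
  qed simp
qed simp

lemma integrable_wait: "k \<le> n \<Longrightarrow> integrable M (wait \<tau> y k)"
  using wait_square_integrable M.square_integrable_imp_integrable by blast

text \<open>The waiting time of slot k only depends on the service times of the patients in the earlier
  slots, which are independent of the patient in slot k.\<close>
lemma indep_wait_service:
  assumes k: "k \<in> {1..n}"
  shows "M.indep_var borel (wait \<tau> y k) borel (Bs (\<tau> k))"
proof -
  define A where "A = \<tau> ` {1..<k}"
  have "A \<subseteq> {1..n}"
    unfolding A_def using k by (intro image_subsetI slot_patient_in) simp
  moreover have "{\<tau> k} \<subseteq> {1..n}"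
    using slot_patient_in[OF k] by simp
  moreover have "A \<inter> {\<tau> k} = {}"
    using permutes_inj[OF \<tau>] k by (auto simp: A_def inj_eq)
  ultimately have "M.indep_var (PiM A (\<lambda>_. borel)) (\<lambda>s. restrict (\<lambda>i. Bs i s) A)
                      (PiM {\<tau> k} (\<lambda>_. borel)) (\<lambda>s. restrict (\<lambda>i. Bs i s) {\<tau> k})"
    using M.indep_var_restrict[OF Bs_indep] by blast
  then have "M.indep_var borel ((\<lambda>b. wait_time \<tau> y b k) \<circ> (\<lambda>s. restrict (\<lambda>i. Bs i s) A))
                         borel ((\<lambda>b. b (\<tau> k)) \<circ> (\<lambda>s. restrict (\<lambda>i. Bs i s) {\<tau> k}))"
    by (rule M.indep_var_compose) (auto simp: A_def intro: measurable_wait_time_PiM)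
  moreover have "(\<lambda>b. wait_time \<tau> y b k) \<circ> (\<lambda>s. restrict (\<lambda>i. Bs i s) A) = wait \<tau> y k"
    unfolding comp_def by (intro ext wait_time_cong) (auto simp: A_def)
  ultimately show ?thesis
    by (simp add: comp_def)
qed

lemma integrable_idle: "k \<le> n \<Longrightarrow> integrable M (idle \<tau> y k)"
proof (induction k)
  case (Suc k)
  show ?case
  proof (cases "k = 0")
    case False
    then have "\<tau> k \<in> {1..n}" using Suc.prems slot_patient_in[of k] by simp
    then have "integrable M (\<lambda>s. wait \<tau> y k s + (Bs (\<tau> k) s - y (\<tau> k)))"
      using integrable_wait[of k] Suc.prems service_shift_moments(1) by simp
    then have slot: "integrable M (\<lambda>s. wait \<tau> y k s + Bs (\<tau> k) s - y (\<tau> k))"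
      by (simp add: add_diff_eq)
    have "integrable M (\<lambda>s. max 0 (- (wait \<tau> y k s + Bs (\<tau> k) s - y (\<tau> k))))"
      using integrable_minus[OF slot] by (intro integrable_max) simp_all
    then show ?thesis using False by simp
  qed simp
qed simp

lemma slot_moments:
  assumes k: "1 \<le> k" "k < n"
  defines "j \<equiv> \<tau> k"
  shows "integral\<^sup>L M (wait \<tau> y (Suc k)) - integral\<^sup>L M (idle \<tau> y (Suc k))
           = integral\<^sup>L M (wait \<tau> y k) + (\<mu> j - y j)"
    and "integral\<^sup>L M (\<lambda>s. (wait \<tau> y (Suc k) s)\<^sup>2) + integral\<^sup>L M (\<lambda>s. (idle \<tau> y (Suc k) s)\<^sup>2)
           = integral\<^sup>L M (\<lambda>s. (wait \<tau> y k s)\<^sup>2) + 2 * (\<mu> j - y j) * integral\<^sup>L M (wait \<tau> y k)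
             + (\<sigma> j)\<^sup>2 + (\<mu> j - y j)\<^sup>2"
    and "(integral\<^sup>L M (idle \<tau> y (Suc k)))\<^sup>2 \<le> integral\<^sup>L M (\<lambda>s. (idle \<tau> y (Suc k) s)\<^sup>2)"
proof -
  have j: "j \<in> {1..n}" using k slot_patient_in unfolding j_def by simp
  define V where "V = wait \<tau> y k"
  define Z where "Z s = Bs j s - y j" for s
  have V: "integrable M V" "integrable M (\<lambda>s. (V s)\<^sup>2)"
    using integrable_wait[of k] wait_square_integrable[of k] k unfolding V_def by simp_all
  note Z = service_shift_moments[OF j, of "y j", folded Z_def]
  have "M.indep_var borel V borel Z"
    using M.indep_var_compose[OF indep_wait_service[of k], of "\<lambda>v. v" borel "\<lambda>b. b - y j" borel] k
    unfolding V_def Z_def j_def comp_def by simp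
  note step = M.lindley_step_moments[OF this V Z(1,3)]
  have slot: "wait \<tau> y (Suc k) s = max 0 (V s + Z s)" "idle \<tau> y (Suc k) s = max 0 (- (V s + Z s))" for s
    using k by (simp_all add: V_def Z_def j_def algebra_simps)
  show "integral\<^sup>L M (wait \<tau> y (Suc k)) - integral\<^sup>L M (idle \<tau> y (Suc k))
      = integral\<^sup>L M (wait \<tau> y k) + (\<mu> j - y j)"
    unfolding slot using step(3) Z(2) by (simp add: V_def)
  show "integral\<^sup>L M (\<lambda>s. (wait \<tau> y (Suc k) s)\<^sup>2) + integral\<^sup>L M (\<lambda>s. (idle \<tau> y (Suc k) s)\<^sup>2)
      = integral\<^sup>L M (\<lambda>s. (wait \<tau> y k s)\<^sup>2) + 2 * (\<mu> j - y j) * integral\<^sup>L M (wait \<tau> y k)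
        + (\<sigma> j)\<^sup>2 + (\<mu> j - y j)\<^sup>2"
    unfolding slot using step(4) Z(2,4) by (simp add: V_def algebra_simps)
  show "(integral\<^sup>L M (idle \<tau> y (Suc k)))\<^sup>2 \<le> integral\<^sup>L M (\<lambda>s. (idle \<tau> y (Suc k) s)\<^sup>2)"
    unfolding slot using step(1,2) by (rule M.expectation_square_le)
qed

lemma slot_cost_ge:
  assumes k: "1 \<le> k" "k < n" and "0 \<le> \<omega>" "\<omega> \<le> 1"
    and le: "1 - \<omega> \<le> N.prob {s \<in> space N. B s \<le> q}" and less: "N.prob {s \<in> space N. B s < q} \<le> 1 - \<omega>"
  shows "\<sigma> (\<tau> k) * N.expectation (\<lambda>s. pinball_loss \<omega> (B s - q))
           \<le> \<omega> * integral\<^sup>L M (idle \<tau> y (Suc k)) + (1 - \<omega>) * integral\<^sup>L M (wait \<tau> y (Suc k))"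
proof -
  define j where "j = \<tau> k"
  define t where "t = \<mu> j + \<sigma> j * q"
  have j: "j \<in> {1..n}" using k slot_patient_in unfolding j_def by simp
  have "\<sigma> j * N.expectation (\<lambda>s. pinball_loss \<omega> (B s - q))
      = N.expectation (\<lambda>s. pinball_loss \<omega> (\<sigma> j * (B s - q)))"
    using \<sigma>_pos[OF j] by (simp add: pinball_loss_scale)
  also have "\<dots> = M.expectation (\<lambda>s. pinball_loss \<omega> (Bs j s - t))"
    using integral_service[OF j, of "\<lambda>x. pinball_loss \<omega> (x - t)"] by (simp add: t_def algebra_simps)
  also have "\<dots> \<le> M.expectation (\<lambda>s. pinball_loss \<omega> (wait \<tau> y k s + Bs j s - y j))"
  proof (rule M.pinball_loss_indep_shift_ge)
    show "M.indep_var borel (wait \<tau> y k) borel (Bs j)"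
      using indep_wait_service[of k] k unfolding j_def by simp
    show "integrable M (wait \<tau> y k)" "integrable M (Bs j)"
      using integrable_wait[of k] k service_shift_moments(1)[OF j, of 0] by simp_all
  qed (use assms prob_service_le_less[OF j] in \<open>simp_all add: t_def\<close>)
  also have "\<dots> = M.expectation (\<lambda>s. \<omega> * idle \<tau> y (Suc k) s + (1 - \<omega>) * wait \<tau> y (Suc k) s)"
    unfolding j_def using k by (intro Bochner_Integration.integral_cong refl slot_cost_eq_pinball_loss[symmetric]) simp
  also have "\<dots> = \<omega> * integral\<^sup>L M (idle \<tau> y (Suc k)) + (1 - \<omega>) * integral\<^sup>L M (wait \<tau> y (Suc k))"
    using k integrable_idle[of "Suc k"] integrable_wait[of "Suc k"] by simp
  finally show ?thesis unfolding j_def .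
qed

end

lemma appt_cost_ge:
  assumes \<tau>: "\<tau> permutes {1..n}" and "1 \<le> n" and "0 \<le> \<omega>" "\<omega> \<le> 1"
    and \<sigma>_max: "\<And>i. i \<in> {1..n} \<Longrightarrow> \<sigma> i \<le> \<sigma> n"
    and le: "1 - \<omega> \<le> N.prob {s \<in> space N. B s \<le> q}" and less: "N.prob {s \<in> space N. B s < q} \<le> 1 - \<omega>"
  shows "N.expectation (\<lambda>s. pinball_loss \<omega> (B s - q)) * (\<Sum>i = 1..n - 1. \<sigma> i) \<le> appt_cost M Bs n \<tau> y \<omega>"
proof -
  let ?L = "N.expectation (\<lambda>s. pinball_loss \<omega> (B s - q))"
  have "0 \<le> ?L"
    using \<open>0 \<le> \<omega>\<close> \<open>\<omega> \<le> 1\<close> by (simp add: integral_nonneg_AE pinball_loss_nonneg)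
  then have "?L * (\<Sum>i = 1..n - 1. \<sigma> i) \<le> ?L * (\<Sum>k = 1..n - 1. \<sigma> (\<tau> k))"
    using sum_butlast_le_sum_butlast_permutes[of \<tau> n \<sigma>, OF \<tau> \<sigma>_max] by (rule mult_left_mono[rotated])
  also have "\<dots> = (\<Sum>k = 1..n - 1. \<sigma> (\<tau> k) * ?L)"
    by (simp add: sum_distrib_left mult.commute)
  also have "\<dots> \<le> (\<Sum>k = 1..n - 1. \<omega> * M.expectation (idle \<tau> y (Suc k)) + (1 - \<omega>) * M.expectation (wait \<tau> y (Suc k)))"
    by (intro sum_mono slot_cost_ge[OF \<tau> _ _ \<open>0 \<le> \<omega>\<close> \<open>\<omega> \<le> 1\<close> le less]) auto
  also have "\<dots> = appt_cost M Bs n \<tau> y \<omega>"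
    by (rule appt_cost_eq_slot_sum[OF \<open>1 \<le> n\<close>, symmetric])
  finally show ?thesis .
qed

lemma optimal_cost_ge:
  assumes "1 \<le> n" "0 < \<omega>" "\<omega> < 1"
    and \<sigma>_mono: "\<And>i j. 1 \<le> i \<Longrightarrow> i \<le> j \<Longrightarrow> j \<le> n \<Longrightarrow> \<sigma> i \<le> \<sigma> j"
  shows "N.expectation (\<lambda>s. pinball_loss \<omega> (B s - quantile N B (1 - \<omega>))) * (\<Sum>i = 1..n - 1. \<sigma> i)
           \<le> (INF p \<in> {(\<tau>, y). \<tau> permutes {1..n} \<and> (\<forall>j \<in> {1..n}. 0 \<le> y j)}.
                 appt_cost M Bs n (fst p) (snd p) \<omega>)"
proof (rule cINF_greatest)
  have "(id, \<lambda>_. 0) \<in> {(\<tau>, y). \<tau> permutes {1..n} \<and> (\<forall>j \<in> {1..n}. 0 \<le> (y j :: real))}"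
    by (simp add: permutes_id)
  then show "{(\<tau>, y). \<tau> permutes {1..n} \<and> (\<forall>j \<in> {1..n}. 0 \<le> (y j :: real))} \<noteq> {}"
    by blast
  have "0 < 1 - \<omega>" "1 - \<omega> < 1"
    using assms(2,3) by simp_all
  note quantile = quantile_prob_bounds[OF N.prob_space_axioms B_measurable this]
  show "N.expectation (\<lambda>s. pinball_loss \<omega> (B s - quantile N B (1 - \<omega>))) * (\<Sum>i = 1..n - 1. \<sigma> i)
      \<le> appt_cost M Bs n (fst p) (snd p) \<omega>"
    if "p \<in> {(\<tau>, y). \<tau> permutes {1..n} \<and> (\<forall>j \<in> {1..n}. 0 \<le> y j)}" for p
    using that assms quantile by (intro appt_cost_ge) auto
qed

context
  fixes \<alpha> :: real and x :: "nat \<Rightarrow> real"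
  defines "x \<equiv> \<lambda>i. \<mu> i + \<alpha> * \<sigma> i"
begin

lemma identity_schedule_moment_bound:
  assumes "2 \<le> n" and \<sigma>_mono: "\<And>i j. 1 \<le> i \<Longrightarrow> i \<le> j \<Longrightarrow> j \<le> n \<Longrightarrow> \<sigma> i \<le> \<sigma> j"
  shows "2 * \<alpha> * (\<Sum>k = 1..n - 1. M.expectation (wait id x (Suc k)))
           + (M.expectation (wait id x n))\<^sup>2 / \<sigma> (n - 1) \<le> (\<Sum>i = 1..n - 1. \<sigma> i)"
proof -
  define a where "a k = M.expectation (wait id x k)" for k
  define b where "b k = M.expectation (\<lambda>s. (wait id x k s)\<^sup>2)" for k
  define e where "e k = M.expectation (idle id x k)" for k
  define f where "f k = M.expectation (\<lambda>s. (idle id x k s)\<^sup>2)" for k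
  note moments = slot_moments[OF permutes_id, of _ x]
  have recursion: "2 * \<alpha> * (\<Sum>k = 1..n - 1. a (Suc k)) + b (Suc (n - 1)) / \<sigma> (n - 1) \<le> (\<Sum>i = 1..n - 1. \<sigma> i)"
  proof (rule moment_recursion_bound)
    fix i assume "1 \<le> i" "i \<le> n - 1"
    then have i: "1 \<le> i" "i < n" by simp_all
    show "0 < \<sigma> i" using \<sigma>_pos i by simp
    show "a (Suc i) - e (Suc i) = a i - \<alpha> * \<sigma> i"
      using moments(1)[OF i] by (simp add: a_def e_def x_def del: wait_time.simps idle_time.simps)
    show "b (Suc i) + f (Suc i) = b i - 2 * \<alpha> * \<sigma> i * a i + (\<sigma> i)\<^sup>2 * (1 + \<alpha>\<^sup>2)"
      using moments(2)[OF i]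
      by (simp add: a_def b_def f_def x_def power2_eq_square algebra_simps del: wait_time.simps idle_time.simps)
    show "(e (Suc i))\<^sup>2 \<le> f (Suc i)"
      using moments(3)[OF i] by (simp add: e_def f_def del: wait_time.simps idle_time.simps)
  next
    show "\<sigma> i \<le> \<sigma> (Suc i)" if "1 \<le> i" "i < n - 1" for i
      using \<sigma>_mono that by simp
    show "0 \<le> b i" for i
      by (simp add: b_def integral_nonneg_AE)
  qed (use \<open>2 \<le> n\<close> in \<open>simp_all add: b_def\<close>)
  have "(a n)\<^sup>2 \<le> b n"
    using M.expectation_square_le integrable_wait[OF permutes_id, of n x]
      wait_square_integrable[OF permutes_id, of n x] unfolding a_def b_def by simp
  moreover have "0 < \<sigma> (n - 1)"
    using \<sigma>_pos \<open>2 \<le> n\<close> by simp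
  ultimately have "(a n)\<^sup>2 / \<sigma> (n - 1) \<le> b n / \<sigma> (n - 1)"
    by (simp add: divide_right_mono)
  then show ?thesis
    unfolding a_def[symmetric] using recursion \<open>2 \<le> n\<close> by simp
qed

lemma identity_schedule_cost_eq:
  assumes "2 \<le> n"
  shows "appt_cost M Bs n id x \<omega>
    = \<omega> * (M.expectation (wait id x n) + \<alpha> * (\<Sum>i = 1..n - 1. \<sigma> i))
      + (1 - \<omega>) * (\<Sum>k = 1..n - 1. M.expectation (wait id x (Suc k)))"
proof -
  define a where "a k = M.expectation (wait id x k)" for k
  define e where "e k = M.expectation (idle id x k)" for k
  have "a 1 = 0"
    by (simp add: a_def)
  have "(\<Sum>k = 1..n - 1. e (Suc k)) = (\<Sum>k = 1..n - 1. (a (Suc k) - a k) + \<alpha> * \<sigma> k)"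
    using slot_moments(1)[OF permutes_id, of _ x]
    by (intro sum.cong) (auto simp: a_def e_def x_def algebra_simps simp del: wait_time.simps idle_time.simps)
  also have "\<dots> = a n + \<alpha> * (\<Sum>i = 1..n - 1. \<sigma> i)"
    using \<open>2 \<le> n\<close> \<open>a 1 = 0\<close> by (simp add: sum.distrib sum_distrib_left sum_Suc_diff)
  moreover have "1 \<le> n"
    using \<open>2 \<le> n\<close> by simp
  ultimately show ?thesis
    unfolding appt_cost_eq_slot_sum[OF \<open>1 \<le> n\<close>] a_def[symmetric] e_def[symmetric]
    by (simp add: sum.distrib flip: sum_distrib_left)
qed

end

lemma pinball_risk_pos:
  assumes "0 < \<omega>" "\<omega> < 1"
  shows "0 < N.expectation (\<lambda>s. pinball_loss \<omega> (B s - q))"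
proof (rule ccontr)
  assume "\<not> ?thesis"
  then have "N.expectation (\<lambda>s. pinball_loss \<omega> (B s - q)) = 0"
    using assms by (simp add: integral_nonneg_AE pinball_loss_nonneg order.antisym)
  then have vanishes: "AE s in N. pinball_loss \<omega> (B s - q) = 0"
    using integrable_B assms
    by (subst (asm) integral_nonneg_eq_0_iff_AE) (auto simp: integrable_pinball_loss pinball_loss_nonneg)
  have zero: "t = 0" if "pinball_loss \<omega> t = 0" for t
    using pinball_loss_pos[OF assms, of t] that by (cases "t = 0") simp_all
  from vanishes have "AE s in N. B s = q"
    by eventually_elim (auto dest: zero)
  moreover from this have "AE s in N. (B s)\<^sup>2 = q\<^sup>2"
    by eventually_elim simp
  ultimately have "N.expectation B = N.expectation (\<lambda>_. q)"
    "N.expectation (\<lambda>s. (B s)\<^sup>2) = N.expectation (\<lambda>_. q\<^sup>2)"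
    by (intro integral_cong_AE; measurable)+
  then show False
    using B_mean B_second_moment by (simp add: N.prob_space)
qed

lemma sigma_butlast:
  assumes "2 \<le> n"
  shows "0 < \<sigma> (n - 1)" "\<sigma> (n - 1) \<le> (\<Sum>i = 1..n - 1. \<sigma> i)"
  using assms \<sigma>_pos by (simp, intro member_le_sum) (auto intro: less_imp_le)

lemma K_bound_eq_pinball_risk:
  "K_bound N B \<omega> = sqrt (2 * \<omega>) / N.expectation (\<lambda>s. pinball_loss \<omega> (B s - quantile N B (1 - \<omega>)))"
  using integral_pinball_loss[of N "\<lambda>s. B s - quantile N B (1 - \<omega>)" \<omega>] integrable_B
  by (simp add: K_bound_def Let_def)

lemma identity_schedule_cost_le:
  assumes "2 \<le> n" "0 < \<omega>" "\<omega> < 1"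
    and \<sigma>_mono: "\<And>i j. 1 \<le> i \<Longrightarrow> i \<le> j \<Longrightarrow> j \<le> n \<Longrightarrow> \<sigma> i \<le> \<sigma> j"
    and \<alpha>: "\<alpha> = sqrt ((1 - \<omega>) / (2 * \<omega>) + \<sigma> (n - 1) / (2 * (\<Sum>i = 1..n - 1. \<sigma> i)))"
  shows "appt_cost M Bs n id (\<lambda>i. \<mu> i + \<alpha> * \<sigma> i) \<omega> \<le> sqrt (2 * \<omega>) * (\<Sum>i = 1..n - 1. \<sigma> i)"
proof -
  let ?x = "\<lambda>i. \<mu> i + \<alpha> * \<sigma> i"
  have "M.expectation (wait id ?x n) \<le> (\<Sum>k = 1..n - 1. M.expectation (wait id ?x (Suc k)))"
    using \<open>2 \<le> n\<close> member_le_sum[of "n - 1" "{1..n - 1}" "\<lambda>k. M.expectation (wait id ?x (Suc k))"]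
    by (simp add: integral_nonneg_AE wait_time_nonneg)
  then show ?thesis
    using identity_schedule_cost_eq[OF \<open>2 \<le> n\<close>, of \<alpha> \<omega>]
      cost_le_sqrt_of_moment_bound[OF \<open>0 < \<omega>\<close> \<open>\<omega> < 1\<close> sigma_butlast[OF \<open>2 \<le> n\<close>] \<alpha> _
        identity_schedule_moment_bound[OF \<open>2 \<le> n\<close> \<sigma>_mono]]
    by simp
qed

end

theorem theorem5p1:
  fixes M :: "'a measure" and Bs :: "nat \<Rightarrow> 'a \<Rightarrow> real"
    and N :: "'b measure" and B :: "'b \<Rightarrow> real"
    and n :: nat and \<omega> :: real and \<mu> \<sigma> :: "nat \<Rightarrow> real"
  assumes "n \<ge> 2"
    and "0 < \<omega>" and "\<omega> < 1"
    and "prob_space N" and "B \<in> borel_measurable N"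
    and "integrable N (\<lambda>s. (B s)^2)"
    and "prob_space.expectation N B = 0"
    and "prob_space.variance N B = 1"
    and "prob_space M"
    and "\<And>i. i \<in> {1..n} \<Longrightarrow> Bs i \<in> borel_measurable M"
    and "prob_space.indep_vars M (\<lambda>_. borel) Bs {1..n}"
    and "\<And>i. i \<in> {1..n} \<Longrightarrow> distr M borel (Bs i) = distr N borel (\<lambda>s. \<mu> i + \<sigma> i * B s)"
    and "\<And>i. i \<in> {1..n} \<Longrightarrow> 0 < \<sigma> i"
    and "\<And>i j. 1 \<le> i \<Longrightarrow> i \<le> j \<Longrightarrow> j \<le> n \<Longrightarrow> \<sigma> i \<le> \<sigma> j"
  defines "\<alpha> \<equiv> sqrt ((1 - \<omega>) / (2 * \<omega>) + \<sigma> (n - 1) / (2 * (\<Sum>i = 1..n - 1. \<sigma> i)))"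
  defines "x \<equiv> (\<lambda>i. \<mu> i + \<alpha> * \<sigma> i)"
  shows "appt_cost M Bs n id x \<omega> /
           (INF p \<in> {(\<tau>, y). \<tau> permutes {1..n} \<and> (\<forall>j \<in> {1..n}. 0 \<le> y j)}.
              appt_cost M Bs n (fst p) (snd p) \<omega>)
         \<le> K_bound N B \<omega>"
proof -
  interpret appointment_model M N Bs B n \<mu> \<sigma>
    using assms(4-13) by (intro appointment_model.intro appointment_model_axioms.intro) simp_all
  define S where "S = (\<Sum>i = 1..n - 1. \<sigma> i)"
  define L where "L = N.expectation (\<lambda>s. pinball_loss \<omega> (B s - quantile N B (1 - \<omega>)))"
  define D where "D = (INF p \<in> {(\<tau>, y). \<tau> permutes {1..n} \<and> (\<forall>j \<in> {1..n}. 0 \<le> y j)}.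
                         appt_cost M Bs n (fst p) (snd p) \<omega>)"
  have "0 < L" "0 < S"
    using pinball_risk_pos[OF assms(2,3)] sigma_butlast[OF assms(1)] by (simp_all add: L_def S_def)
  have "L * S \<le> D"
    unfolding L_def S_def D_def using assms(1-3,14) by (intro optimal_cost_ge) simp_all
  moreover have "appt_cost M Bs n id x \<omega> \<le> sqrt (2 * \<omega>) * S"
    unfolding x_def S_def using identity_schedule_cost_le[OF assms(1-3,14), of \<alpha>] \<alpha>_def by simp
  ultimately have "appt_cost M Bs n id x \<omega> / D \<le> sqrt (2 * \<omega>) * S / (L * S)"
    using \<open>0 < L\<close> \<open>0 < S\<close> assms(2) by (intro frac_le) simp_all
  also have "\<dots> = K_bound N B \<omega>"
    using \<open>0 < S\<close> by (simp add: K_bound_eq_pinball_risk L_def)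
  finally show ?thesis
    unfolding D_def .
qed

end
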